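(* Let $U$ be a finite set, $\mathcal{C}\subseteq 2^U$, and $f:2^U\to\mathbb{R}$ non-decreasing and $\varepsilon$-approximately $\mathcal{C}$-submodular for some $\varepsilon\ge 0$. Let $S\subseteq U$ be a Greedy Maximum Differential Set of $f$ (with ordering $s_1,\dots,s_{|S|}$) with $f(S)=f_{\max}$ and $\delta_{\min}>0$. Let $C\subseteq U$ be a nonempty set with $f(C)=f_{\max}$ whose elements admit an ordering $c_1,\dots,c_{|C|}$ such that $C_i=\{c_1,\dots,c_i\}\in\mathcal{C}$ for every $i=1,\dots,|C|$. Then $$|S|<\Big(1+\frac{\varepsilon}{\delta_{\min}}+\ln\Big(\frac{\delta_{\max}}{\delta_{\min}}\Big)\Big)\cdot|C|+1 .$$
   Context: For $f:2^U\to\mathbb{R}$, $A\subseteq U$, $x\in U$: $\Delta_x f(A)=f(A\cup\{x\})-f(A)$, $f_{\max}=\max_{X\subseteq U}f(X)$. $f$ is non-decreasing if $A\subseteq B\Rightarrow f(A)\le f(B)$. Given $\mathcal{C}\subseteq 2^U$, $f$ is $\varepsilon$-approximately $\mathcal{C}$-submodular if for every $A\subseteq U$, every $B\in\mathcal{C}$ and every $x\in U\setminus B$, $\Delta_x f(A\cup B)\le\Delta_x f(A)+\varepsilon$. A set $S\subseteq U$ is a Greedy Maximum Differential Set of $f$ if its elements can be ordered $s_1,\dots,s_{|S|}$ such that, with $S_0=\emptyset$, $S_i=\{s_1,\dots,s_i\}$, for every $i$: $\Delta_{s_i}f(S_{i-1})\ge\Delta_u f(S_{i-1})$ for all $u\in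 U$. For such $S$: $\delta_{\max}=\Delta_{s_1}f(\emptyset)=\max_{x\in U}\Delta_x f(\emptyset)$ and $\delta_{\min}=\min_{1\le i\le|S|}\Delta_{s_i}f(S_{i-1})$. *)

theory Defs
  imports "HOL-Analysis.Analysis"
begin

definition delta :: "('a set \<Rightarrow> real) \<Rightarrow> 'a \<Rightarrow> 'a set \<Rightarrow> real" where
  "delta f x A = f (A \<union> {x}) - f A"

definition fmax :: "'a set \<Rightarrow> ('a set \<Rightarrow> real) \<Rightarrow> real" where
  "fmax U f = Max (f ` Pow U)"

definition non_decreasing :: "'a set \<Rightarrow> ('a set \<Rightarrow> real) \<Rightarrow> bool" where
  "non_decreasing U f \<longleftrightarrow> (\<forall>A B. A \<subseteq> B \<and> B \<subseteq> U \<longrightarrow> f A \<le> f B)"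

definition approx_C_submodular ::
  "'a set \<Rightarrow> 'a set set \<Rightarrow> real \<Rightarrow> ('a set \<Rightarrow> real) \<Rightarrow> bool" where
  "approx_C_submodular U \<C> \<epsilon> f \<longleftrightarrow>
     (\<forall>A B x. A \<subseteq> U \<and> B \<in> \<C> \<and> x \<in> U - B \<longrightarrow>
        delta f x (A \<union> B) \<le> delta f x A + \<epsilon>)"

definition greedy_max_diff_seq :: "'a set \<Rightarrow> ('a set \<Rightarrow> real) \<Rightarrow> 'a list \<Rightarrow> bool" where
  "greedy_max_diff_seq U f s \<longleftrightarrow> distinct s \<and> set s \<subseteq> U \<and>
     (\<forall>i < length s. \<forall>u \<in> U. delta f u (set (take i s)) \<le> delta f (s ! i) (set (take i s)))"

definition delta_max :: "'a set \<Rightarrow> ('a set \<Rightarrow> real) \<Rightarrow> real" where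
  "delta_max U f = Max ((\<lambda>x. delta f x {}) ` U)"

definition delta_min :: "('a set \<Rightarrow> real) \<Rightarrow> 'a list \<Rightarrow> real" where
  "delta_min f s = Min ((\<lambda>i. delta f (s ! i) (set (take i s))) ` {..<length s})"

end

theory Submission
  imports Defs
begin

text \<open>Let g_i = f_max - f(S_i) be the gap left after i greedy steps and k = |C|. Adding
  c_1, ..., c_k to S_i closes the gap, and by approximate submodularity along the chain
  C_1, ..., C_k each of these k gains is at most delta_i + \<epsilon>, where delta_i is the i-th greedy
  gain; so g_i \<le> k (delta_i + \<epsilon>). Since g_(i+1) = g_i - delta_i, the quantity g_i - k \<epsilon>
  shrinks by the factor 1 - 1/k \<le> exp(-1/k) per step, starting below k delta_max. Hence within
  fewer than k ln(delta_max / delta_min) + 1 steps the gap drops to k (delta_min + \<epsilon>), and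
  as every step removes at least delta_min, at most k (1 + \<epsilon> / delta_min) steps follow.\<close>

lemma one_minus_power_le_exp:
  fixes x :: real
  assumes "x \<le> 1"
  shows "(1 - x) ^ n \<le> exp (- real n * x)"
proof -
  have "(1 - x) ^ n \<le> exp (- x) ^ n"
    using assms exp_ge_add_one_self[of "- x"] by (intro power_mono) auto
  then show ?thesis by (simp add: exp_of_nat_mult[symmetric])
qed

lemma gap_geometric_decay:
  fixes g d :: "nat \<Rightarrow> real" and k :: nat and \<epsilon> :: real
  assumes "k > 0"
    and step: "\<And>i. i < n \<Longrightarrow> g (Suc i) = g i - d i"
    and gap: "\<And>i. i < n \<Longrightarrow> g i \<le> k * (d i + \<epsilon>)"
    and "i \<le> n"
  shows "g i - k * \<epsilon> \<le> (1 - 1 / k) ^ i * (g 0 - k * \<epsilon>)"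
  using \<open>i \<le> n\<close>
proof (induction i)
  case 0
  then show ?case by simp
next
  case (Suc i)
  then have "i < n" by simp
  have q_nonneg: "0 \<le> 1 - 1 / real k"
    using \<open>k > 0\<close> by (simp add: field_simps)
  have "g (Suc i) - k * \<epsilon> = g i - d i - k * \<epsilon>"
    using step[OF \<open>i < n\<close>] by simp
  also have "\<dots> \<le> (1 - 1 / k) * (g i - k * \<epsilon>)"
    using gap[OF \<open>i < n\<close>] \<open>k > 0\<close> by (simp add: field_simps)
  also have "\<dots> \<le> (1 - 1 / k) * ((1 - 1 / k) ^ i * (g 0 - k * \<epsilon>))"
    using Suc q_nonneg by (intro mult_left_mono) auto
  finally show ?case by simp
qed

lemma gap_ge_remaining_steps:
  fixes g d :: "nat \<Rightarrow> real" and \<delta> :: real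
  assumes step: "\<And>i. i < n \<Longrightarrow> g (Suc i) = g i - d i"
    and dmin: "\<And>i. i < n \<Longrightarrow> \<delta> \<le> d i"
    and "g n = 0" and "i \<le> n"
  shows "real (n - i) * \<delta> \<le> g i"
  using \<open>i \<le> n\<close>
proof (induction rule: inc_induct)
  case base
  then show ?case using \<open>g n = 0\<close> by simp
next
  case (step j)
  then have "real (n - j) = real (n - Suc j) + 1" by simp
  then show ?case
    using step.IH assms(1,2)[OF \<open>j < n\<close>] by (simp add: algebra_simps)
qed

lemma steps_bound_from_gap_recurrence:
  fixes g d :: "nat \<Rightarrow> real" and k :: nat and \<epsilon> \<delta>\<^sub>m\<^sub>i\<^sub>n \<delta>\<^sub>m\<^sub>a\<^sub>x :: real
  assumes "k > 0" and "\<epsilon> \<ge> 0" and "0 < \<delta>\<^sub>m\<^sub>i\<^sub>n" and "\<delta>\<^sub>m\<^sub>i\<^sub>n \<le> \<delta>\<^sub>m\<^sub>a\<^sub>x"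
    and step: "\<And>i. i < n \<Longrightarrow> g (Suc i) = g i - d i"
    and dmin: "\<And>i. i < n \<Longrightarrow> \<delta>\<^sub>m\<^sub>i\<^sub>n \<le> d i"
    and gap: "\<And>i. i < n \<Longrightarrow> g i \<le> k * (d i + \<epsilon>)"
    and gap0: "g 0 \<le> k * (\<delta>\<^sub>m\<^sub>a\<^sub>x + \<epsilon>)"
    and "g n = 0"
  shows "real n < (1 + \<epsilon> / \<delta>\<^sub>m\<^sub>i\<^sub>n + ln (\<delta>\<^sub>m\<^sub>a\<^sub>x / \<delta>\<^sub>m\<^sub>i\<^sub>n)) * k + 1"
proof -
  define small where "small i \<longleftrightarrow> g i \<le> k * (\<delta>\<^sub>m\<^sub>i\<^sub>n + \<epsilon>)" for i
  define m where "m = (LEAST i. small i)"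
  have "small n"
    unfolding small_def using \<open>g n = 0\<close> assms(2,3) by simp
  have "m \<le> n"
    unfolding m_def using \<open>small n\<close> by (rule Least_le)
  have "small m"
    unfolding m_def using \<open>small n\<close> by (rule LeastI)
  have tail: "real (n - m) \<le> k * (1 + \<epsilon> / \<delta>\<^sub>m\<^sub>i\<^sub>n)"
  proof -
    have "real (n - m) * \<delta>\<^sub>m\<^sub>i\<^sub>n \<le> k * (\<delta>\<^sub>m\<^sub>i\<^sub>n + \<epsilon>)"
      using gap_ge_remaining_steps[OF step dmin \<open>g n = 0\<close> \<open>m \<le> n\<close>] \<open>small m\<close>
      unfolding small_def by linarith
    then show ?thesis
      using \<open>0 < \<delta>\<^sub>m\<^sub>i\<^sub>n\<close> by (simp add: field_simps)
  qed
  have head: "real m < k * ln (\<delta>\<^sub>m\<^sub>a\<^sub>x / \<delta>\<^sub>m\<^sub>i\<^sub>n) + 1"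
  proof (cases m)
    case 0
    have "0 \<le> ln (\<delta>\<^sub>m\<^sub>a\<^sub>x / \<delta>\<^sub>m\<^sub>i\<^sub>n)"
      using assms(3,4) by simp
    with 0 show ?thesis by (simp add: add_nonneg_pos)
  next
    case (Suc j)
    then have "\<not> small j"
      using not_less_Least[of j small] unfolding m_def by simp
    have "j \<le> n"
      using \<open>m \<le> n\<close> Suc by simp
    from \<open>\<not> small j\<close> have "k * \<delta>\<^sub>m\<^sub>i\<^sub>n < g j - k * \<epsilon>"
      unfolding small_def by (simp add: algebra_simps)
    also have "\<dots> \<le> (1 - 1 / k) ^ j * (g 0 - k * \<epsilon>)"
      by (rule gap_geometric_decay[where n = n and d = d]) (use assms(1) step gap \<open>j \<le> n\<close> in auto)
    also have "\<dots> \<le> (1 - 1 / k) ^ j * (k * \<delta>\<^sub>m\<^sub>a\<^sub>x)"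
    proof (rule mult_left_mono)
      show "g 0 - k * \<epsilon> \<le> k * \<delta>\<^sub>m\<^sub>a\<^sub>x"
        using gap0 by (simp add: algebra_simps)
      show "0 \<le> (1 - 1 / real k) ^ j"
        using \<open>k > 0\<close> by simp
    qed
    also have "\<dots> \<le> exp (- real j * (1 / k)) * (k * \<delta>\<^sub>m\<^sub>a\<^sub>x)"
      using one_minus_power_le_exp[of "1 / k" j] \<open>k > 0\<close> assms(3,4)
      by (intro mult_right_mono) auto
    finally have "\<delta>\<^sub>m\<^sub>i\<^sub>n < exp (- real j / k) * \<delta>\<^sub>m\<^sub>a\<^sub>x"
      using \<open>k > 0\<close> by simp
    then have "ln \<delta>\<^sub>m\<^sub>i\<^sub>n < ln (exp (- real j / k) * \<delta>\<^sub>m\<^sub>a\<^sub>x)"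
      using assms(3) by (subst ln_less_cancel_iff) auto
    also have "\<dots> = - real j / k + ln \<delta>\<^sub>m\<^sub>a\<^sub>x"
      using assms(3,4) by (simp add: ln_mult)
    finally have "real j < k * ln (\<delta>\<^sub>m\<^sub>a\<^sub>x / \<delta>\<^sub>m\<^sub>i\<^sub>n)"
      using \<open>k > 0\<close> assms(3,4) by (simp add: ln_div field_simps)
    then show ?thesis using Suc by simp
  qed
  show ?thesis
    using head tail \<open>m \<le> n\<close> by (simp add: algebra_simps of_nat_diff)
qed

lemma delta_take_Suc:
  assumes "i < length xs"
  shows "delta f (xs ! i) (A \<union> set (take i xs))
    = f (A \<union> set (take (Suc i) xs)) - f (A \<union> set (take i xs))"
  using assms by (simp add: delta_def take_Suc_conv_app_nth Un_insert_right)

lemma sum_delta_take: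
  assumes "j \<le> length xs"
  shows "(\<Sum>i<j. delta f (xs ! i) (A \<union> set (take i xs))) = f (A \<union> set (take j xs)) - f A"
proof -
  have "(\<Sum>i<j. delta f (xs ! i) (A \<union> set (take i xs)))
      = (\<Sum>i<j. f (A \<union> set (take (Suc i) xs)) - f (A \<union> set (take i xs)))"
    using assms by (intro sum.cong) (simp_all add: delta_take_Suc)
  also have "\<dots> = f (A \<union> set (take j xs)) - f A"
    by (rule sum_lessThan_telescope[where f = "\<lambda>i. f (A \<union> set (take i xs))", simplified])
  finally show ?thesis .
qed

lemma nth_notin_set_take:
  assumes "distinct xs" and "j < length xs"
  shows "xs ! j \<notin> set (take j xs)"
  using assms by (simp add: in_set_conv_nth nth_eq_iff_index_eq)

lemma delta_min_le:
  assumes "i < length s"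
  shows "delta_min f s \<le> delta f (s ! i) (set (take i s))"
  unfolding delta_min_def using assms by (intro Min_le) auto

lemma delta_le_delta_max:
  assumes "finite U" and "u \<in> U"
  shows "delta f u {} \<le> delta_max U f"
  unfolding delta_max_def using assms by (intro Max_ge) auto

lemma approx_C_submodular_gap_bound:
  fixes f :: "'a set \<Rightarrow> real" and \<epsilon> \<delta> :: real
  assumes mono: "non_decreasing U f"
    and submod: "approx_C_submodular U \<C> \<epsilon> f" and "\<epsilon> \<ge> 0"
    and "A \<subseteq> U" and "distinct c" and "set c \<subseteq> U"
    and chain: "\<forall>i \<in> {1..length c}. set (take i c) \<in> \<C>"
    and max_gain: "\<And>u. u \<in> U \<Longrightarrow> delta f u A \<le> \<delta>"
  shows "f (set c) - f A \<le> length c * (\<delta> + \<epsilon>)"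
proof -
  have gain_le: "delta f (c ! j) (A \<union> set (take j c)) \<le> \<delta> + \<epsilon>" if "j < length c" for j
  proof -
    have "c ! j \<in> U" using that \<open>set c \<subseteq> U\<close> by auto
    have "delta f (c ! j) (A \<union> set (take j c)) \<le> delta f (c ! j) A + \<epsilon>"
    proof (cases "j = 0")
      case True
      then show ?thesis using \<open>\<epsilon> \<ge> 0\<close> by simp
    next
      case False
      then have "set (take j c) \<in> \<C>" using chain that by auto
      moreover have "c ! j \<notin> set (take j c)"
        using nth_notin_set_take \<open>distinct c\<close> that by blast
      ultimately show ?thesis
        using submod \<open>A \<subseteq> U\<close> \<open>c ! j \<in> U\<close> unfolding approx_C_submodular_def by blast
    qed
    then show ?thesis using max_gain[OF \<open>c ! j \<in> U\<close>] by simp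
  qed
  have "f (set c) \<le> f (A \<union> set (take (length c) c))"
    using mono \<open>A \<subseteq> U\<close> \<open>set c \<subseteq> U\<close> unfolding non_decreasing_def by auto
  also have "\<dots> = f A + (\<Sum>j<length c. delta f (c ! j) (A \<union> set (take j c)))"
    by (simp add: sum_delta_take)
  also have "\<dots> \<le> f A + (\<Sum>j<length c. \<delta> + \<epsilon>)"
    using gain_le by (intro add_left_mono sum_mono) auto
  finally show ?thesis by simp
qed

theorem mainTheorem2:
  fixes U :: "'a set" and \<C> :: "'a set set" and f :: "'a set \<Rightarrow> real"
    and \<epsilon> :: real and s c :: "'a list"
  assumes "finite U"
    and "\<C> \<subseteq> Pow U"
    and "\<epsilon> \<ge> 0"
    and "non_decreasing U f"
    and "approx_C_submodular U \<C> \<epsilon> f"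
    and "greedy_max_diff_seq U f s"
    and "f (set s) = fmax U f"
    and "s \<noteq> []"
    and "delta_min f s > 0"
    and "distinct c" and "c \<noteq> []" and "set c \<subseteq> U"
    and "f (set c) = fmax U f"
    and "\<forall>i \<in> {1..length c}. set (take i c) \<in> \<C>"
  shows "real (length s) <
    (1 + \<epsilon> / delta_min f s + ln (delta_max U f / delta_min f s)) * real (length c) + 1"
proof -
  define g where "g i = fmax U f - f (set (take i s))" for i
  define d where "d i = delta f (s ! i) (set (take i s))" for i
  have "set s \<subseteq> U"
    and greedy: "\<And>i u. i < length s \<Longrightarrow> u \<in> U \<Longrightarrow> delta f u (set (take i s)) \<le> d i"
    using assms(6) unfolding greedy_max_diff_seq_def d_def by auto
  have gap_bound: "fmax U f - f A \<le> length c * (\<delta> + \<epsilon>)"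
    if "A \<subseteq> U" and "\<And>u. u \<in> U \<Longrightarrow> delta f u A \<le> \<delta>" for A \<delta>
    using approx_C_submodular_gap_bound[OF assms(4,5,3) that(1) assms(10,12,14) that(2)] assms(13)
    by simp
  have "set (take i s) \<subseteq> U" for i
    using \<open>set s \<subseteq> U\<close> set_take_subset by fast
  have "delta_min f s \<le> delta_max U f"
    using delta_min_le[of 0 s f] delta_le_delta_max[OF assms(1), of "s ! 0" f] \<open>set s \<subseteq> U\<close> assms(8)
    by (simp add: subset_iff)
  moreover have "g (Suc i) = g i - d i" if "i < length s" for i
    using delta_take_Suc[OF that, of f "{}"] unfolding g_def d_def by simp
  moreover have "g i \<le> length c * (d i + \<epsilon>)" if "i < length s" for i
    unfolding g_def using gap_bound greedy[OF that] \<open>set (take i s) \<subseteq> U\<close> by blast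
  moreover have "g 0 \<le> length c * (delta_max U f + \<epsilon>)"
    unfolding g_def using gap_bound[of "{}"] delta_le_delta_max[OF assms(1)] by simp
  moreover have "g (length s) = 0"
    unfolding g_def using assms(7) by simp
  ultimately show ?thesis
    using steps_bound_from_gap_recurrence[of "length c" \<epsilon> "delta_min f s" "delta_max U f" "length s" g d]
      assms(3,9,11) delta_min_le[of _ s f] unfolding d_def by simp
qed

end
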